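(* Let $\Sigma\in\mathbb C^{L_T\times L_T}$ be positive semidefinite and let $M\ge\mathrm{Rank}(\Sigma)$ be an integer. Then there exist unit-norm vectors $t_1,\dots,t_M\in\mathbb C^{L_T}$ and powers $p_1,\dots,p_M$ with $\Sigma=\sum_{m=1}^M p_mt_mt_m^\dagger$ and $p_m=\mathrm{Tr}(\Sigma)/M$ for all $m$; i.e. uniform power allocation over the streams of a link loses no optimality. *)

theory Defs
  imports "HOL-Analysis.Analysis"
begin

definition conj_transpose :: "complex^'n^'m \<Rightarrow> complex^'m^'n" where
  "conj_transpose A = (\<chi> i j. cnj (A $ j $ i))"

definition herm_form :: "complex^'n^'n \<Rightarrow> complex^'n \<Rightarrow> complex" where
  "herm_form A x = (\<Sum>i\<in>UNIV. cnj (x $ i) * (A *v x) $ i)"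

definition psd :: "complex^'n^'n \<Rightarrow> bool" where
  "psd A \<longleftrightarrow> conj_transpose A = A \<and>
     (\<forall>x. Im (herm_form A x) = 0 \<and> Re (herm_form A x) \<ge> 0)"

definition outer :: "complex^'n \<Rightarrow> complex^'n^'n" where
  "outer t = (\<chi> i j. t $ i * cnj (t $ j))"

end

theory Submission
  imports Defs
begin

(*
  A positive semidefinite matrix S of rank r is a sum of r rank-one
  matrices v v^dagger: pick a nonzero diagonal entry S_ii, subtract the rank-one
  matrix v v^dagger with v = S e_i / sqrt S_ii (one step of a Cholesky
  factorisation); the remainder is the Schur complement, which is again PSD and
  has its i-th column zero, hence strictly smaller rank.  Padding with zero
  vectors gives S = sum_{k<M} v_k v_k^dagger for every M >= rank S.
  Second, the squared norms of the v_k can be equalised: a plane rotation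
  (x, y) |-> (cos t x + sin t y, -sin t x + cos t y) preserves both
  x x^dagger + y y^dagger and |x|^2 + |y|^2, and by the intermediate value
  theorem it can bring |y|^2 to the average c = trace S / M whenever c lies
  between |x|^2 and |y|^2.  Repeating this fixes one vector at a time.
  Finally t_m = v_m / sqrt c and p_m = c give the theorem.
*)

definition sesq :: "complex^'n^'n \<Rightarrow> complex^'n \<Rightarrow> complex^'n \<Rightarrow> complex" where
  "sesq A x y = (\<Sum>k\<in>UNIV. \<Sum>l\<in>UNIV. cnj (x$k) * A$k$l * y$l)"

lemma herm_form_sesq: "herm_form A x = sesq A x x"
  unfolding herm_form_def matrix_vector_mult_def sesq_def
  by (simp add: sum_distrib_left mult.assoc)

lemma sesq_diff_diff:
  "sesq A (x - z) (x - z) = sesq A x x - sesq A x z - sesq A z x + sesq A z z"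
  unfolding sesq_def by (simp add: algebra_simps sum_subtractf sum.distrib)

lemma sesq_diff_matrix: "sesq (A - B) x y = sesq A x y - sesq B x y"
  unfolding sesq_def by (simp add: algebra_simps sum_subtractf)

lemma sesq_axis_left: "sesq A (axis i c) y = cnj c * (\<Sum>l\<in>UNIV. A$i$l * y$l)"
proof -
  have "\<And>k. (\<Sum>l\<in>UNIV. cnj (axis i c $ k) * A$k$l * y$l) =
     (if k = i then cnj c * (\<Sum>l\<in>UNIV. A$i$l * y$l) else 0)"
    by (simp add: axis_def sum_distrib_left mult.assoc)
  then show ?thesis unfolding sesq_def by simp
qed

lemma sesq_axis_right: "sesq A x (axis i c) = (\<Sum>k\<in>UNIV. cnj (x$k) * A$k$i) * c"
  unfolding sesq_def axis_def
  by (simp add: sum_distrib_right mult.assoc if_distrib sum.delta cong: if_cong)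

lemma sesq_axis_axis: "sesq A (axis i a) (axis j b) = cnj a * A$i$j * b"
  unfolding sesq_axis_left by (simp add: axis_def if_distrib sum.delta cong: if_cong)

lemma sesq_outer:
  "sesq (outer v) x y = (\<Sum>k\<in>UNIV. cnj (x$k) * v$k) * (\<Sum>l\<in>UNIV. cnj (v$l) * y$l)"
  unfolding sesq_def outer_def by (simp add: sum_product mult.assoc)

lemma psd_diag:
  assumes "psd S"
  shows "Im (S$i$i) = 0" "Re (S$i$i) \<ge> 0"
  using assms sesq_axis_axis[of S i 1 i 1] unfolding psd_def herm_form_sesq
  by (metis complex_cnj_one mult_1 mult_1_right)+

lemma psd_herm:
  assumes "psd S"
  shows "cnj (S$j$i) = S$i$j"
proof -
  have "conj_transpose S $ i $ j = S $ i $ j" using assms unfolding psd_def by simp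
  then show ?thesis unfolding conj_transpose_def by simp
qed

(* a PSD matrix with zero diagonal vanishes: test the form on e_j - conj(S_ji) e_i *)
lemma psd_zero_diag:
  assumes "psd S" and "\<And>i. S$i$i = 0"
  shows "S = 0"
proof -
  have "S$j$i = 0" for i j
  proof -
    define x where "x = axis j 1 - axis i (cnj (S$j$i))"
    have form: "herm_form S x = - 2 * (S$j$i * cnj (S$j$i))"
      unfolding x_def herm_form_sesq sesq_diff_diff sesq_axis_axis
      using assms(2) psd_herm[OF assms(1), of j i]
      by (simp add: algebra_simps) (metis complex_cnj_cnj)
    have "Re (herm_form S x) \<ge> 0" using assms(1) unfolding psd_def by blast
    then have "(cmod (S$j$i))^2 \<le> 0"
      unfolding form by (simp add: complex_mult_cnj cmod_power2)
    then show ?thesis by simp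
  qed
  then show ?thesis by (simp add: vec_eq_iff)
qed

section \<open>Rank-one decomposition\<close>

lemma rank_drop:
  fixes S T :: "complex^'n^'n"
  assumes rows: "\<And>k. row k T \<in> vec.span (rows S)"
    and col: "\<And>k. T$k$i = 0" and diag: "S$i$i \<noteq> 0"
  shows "rank T < rank S"
proof -
  have sub: "vec.span (rows T) \<subseteq> vec.span (rows S)"
    by (rule vec.span_minimal) (use rows in \<open>auto simp: rows_def vec.subspace_span\<close>)
  have "vec.subspace {x :: complex^'n. x$i = 0}"
    unfolding vec.subspace_def by simp
  then have "vec.span (rows T) \<subseteq> {x. x$i = 0}"
    by (intro vec.span_minimal) (use col in \<open>auto simp: rows_def row_def\<close>)
  moreover have "row i S \<in> vec.span (rows S)"
    by (rule vec.span_base) (auto simp: rows_def)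
  moreover have "row i S \<notin> {x. x$i = 0}" using diag by (simp add: row_def)
  ultimately have "vec.span (rows T) \<subset> vec.span (rows S)" using sub by blast
  then show ?thesis unfolding row_rank_def_gen by (rule vec.dim_psubset)
qed

(* one Cholesky step: subtracting v v^dagger with v = S e_i / sqrt S_ii leaves
   the Schur complement, which is PSD because its form at x equals the form of S
   at x - (e_i^T S x / S_ii) e_i, and which has smaller rank *)
lemma psd_peel_rank_one:
  fixes S :: "complex^'n^'n"
  assumes psd: "psd S" and diag: "S$i$i \<noteq> 0"
  shows "\<exists>v. psd (S - outer v) \<and> rank (S - outer v) < rank S"
proof -
  define a where "a = Re (S$i$i)"
  have Sii: "S$i$i = complex_of_real a"
    using psd_diag[OF psd, of i] a_def by (simp add: complex_eq_iff)
  have "a \<noteq> 0" using diag Sii by auto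
  then have apos: "a > 0" using psd_diag[OF psd, of i] a_def by linarith
  define r where "r = complex_of_real (sqrt a)"
  have "sqrt a * sqrt a = a" using apos by simp
  then have rr: "r * r = complex_of_real a" unfolding r_def by (metis of_real_mult)
  have r0: "r \<noteq> 0" and cr: "cnj r = r" using apos by (auto simp: r_def)
  define v where "v = (\<chi> k. S$k$i / r)"
  have H: "\<And>k l. cnj (S$k$l) = S$l$k" using psd_herm[OF psd] by simp
  define T where "T = S - outer v"
  have outer_v: "outer v $ k $ l = S$k$i * S$i$l / complex_of_real a" for k l
    unfolding outer_def v_def using H[of l i] rr r0 by (simp add: cr field_simps)
  have Tkl: "T$k$l = S$k$l - S$k$i * S$i$l / complex_of_real a" for k l
    unfolding T_def by (simp add: outer_v)
  have herm: "conj_transpose T = T"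
    unfolding conj_transpose_def by (simp add: vec_eq_iff Tkl H mult.commute)
  have form: "herm_form T x =
      herm_form S (x - axis i ((\<Sum>l\<in>UNIV. S$i$l * x$l) / complex_of_real a))" for x
  proof -
    define b where "b = (\<Sum>l\<in>UNIV. S$i$l * x$l)"
    define c where "c = b / complex_of_real a"
    have cb: "(\<Sum>k\<in>UNIV. cnj (x$k) * S$k$i) = cnj b"
      unfolding b_def by (simp add: H mult.commute)
    have s1: "(\<Sum>k\<in>UNIV. cnj (x$k) * v$k) = cnj b / r"
      unfolding v_def using cb by (simp add: sum_divide_distrib[symmetric] mult.assoc)
    have s2: "(\<Sum>l\<in>UNIV. cnj (v$l) * x$l) = b / r"
      unfolding v_def b_def by (simp add: cr H sum_divide_distrib[symmetric])
    have e1: "sesq S x (axis i c) = cnj b * c" using sesq_axis_right cb by metis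
    have e2: "sesq S (axis i c) x = cnj c * b" unfolding sesq_axis_left b_def ..
    have e3: "sesq S (axis i c) (axis i c) = cnj c * complex_of_real a * c"
      unfolding sesq_axis_axis Sii ..
    have "herm_form T x = sesq S x x - cnj b / r * (b / r)"
      unfolding herm_form_sesq T_def sesq_diff_matrix sesq_outer s1 s2 ..
    also have "\<dots> = sesq S x x - cnj b * b / complex_of_real a"
      using rr r0 by (simp add: field_simps)
    also have "\<dots> = herm_form S (x - axis i c)"
      unfolding herm_form_sesq sesq_diff_diff e1 e2 e3 using apos by (simp add: c_def field_simps)
    finally show ?thesis unfolding c_def b_def .
  qed
  have "psd T" using herm form psd unfolding psd_def by simp
  moreover have "rank T < rank S"
  proof (rule rank_drop[OF _ _ diag])
    show "T$k$i = 0" for k unfolding Tkl Sii using apos by simp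
    show "row k T \<in> vec.span (rows S)" for k
    proof -
      have "row k T = row k S - (S$k$i / complex_of_real a) *s row i S"
        by (simp add: vec_eq_iff row_def Tkl)
      moreover have "row k S \<in> vec.span (rows S)" "row i S \<in> vec.span (rows S)"
        by (auto intro!: vec.span_base simp: rows_def)
      ultimately show ?thesis by (simp add: vec.span_diff vec.span_scale)
    qed
  qed
  ultimately show ?thesis unfolding T_def by blast
qed

lemma outer_zero [simp]: "outer 0 = 0"
  by (simp add: outer_def vec_eq_iff)

lemma psd_sum_outer:
  fixes S :: "complex^'n^'n"
  shows "psd S \<Longrightarrow> rank S \<le> N \<Longrightarrow> \<exists>v. S = (\<Sum>k<N. outer (v k))"
proof (induction N arbitrary: S)
  case 0
  have "S$i$i = 0" for i
  proof (rule ccontr)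
    assume "S$i$i \<noteq> 0"
    then obtain v where "rank (S - outer v) < rank S" using psd_peel_rank_one[OF 0(1)] by blast
    with 0(2) show False by simp
  qed
  then show ?case using psd_zero_diag[OF 0(1)] by simp
next
  case (Suc N)
  show ?case
  proof (cases "\<forall>i. S$i$i = 0")
    case True
    then have "S = 0" using psd_zero_diag[OF Suc(2)] by simp
    then show ?thesis by (intro exI[of _ "\<lambda>_. 0"]) simp
  next
    case False
    then obtain i where "S$i$i \<noteq> 0" by blast
    from psd_peel_rank_one[OF Suc(2) this] obtain w where
      w: "psd (S - outer w)" "rank (S - outer w) < rank S" by blast
    with Suc(3) have "rank (S - outer w) \<le> N" by simp
    from Suc(1)[OF w(1) this] obtain v where v: "S - outer w = (\<Sum>k<N. outer (v k))"
      by blast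
    have "(\<Sum>k<Suc N. outer ((v(N := w)) k)) = (\<Sum>k<N. outer (v k)) + outer w"
      by (simp add: sum.lessThan_Suc)
    also have "\<dots> = S" unfolding v[symmetric] by simp
    finally show ?thesis by blast
  qed
qed

section \<open>Equalising the norms by plane rotations\<close>

lemma outer_rotation:
  fixes x y :: "complex^'n"
  shows "outer (cos t *\<^sub>R x + sin t *\<^sub>R y) + outer ((- sin t) *\<^sub>R x + cos t *\<^sub>R y)
         = outer x + outer y"
proof -
  have cs: "complex_of_real (cos t) ^ 2 + complex_of_real (sin t) ^ 2 = 1"
    by (metis of_real_add of_real_1 of_real_power sin_cos_squared_add2)
  show ?thesis
    unfolding outer_def vec_eq_iff
    apply (simp add: vector_scaleR_component del: scaleR_conv_of_real)
    apply (simp add: scaleR_conv_of_real)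
    using cs by algebra
qed

lemma norm_rotation:
  fixes x y :: "'a::real_inner"
  shows "norm (cos t *\<^sub>R x + sin t *\<^sub>R y)^2 + norm ((- sin t) *\<^sub>R x + cos t *\<^sub>R y)^2
         = norm x ^2 + norm y ^2"
proof -
  have cs: "(cos t)^2 + (sin t)^2 = 1" by simp
  show ?thesis
    unfolding power2_norm_eq_inner
    apply (simp add: inner_add_left inner_add_right inner_diff_left inner_diff_right
        inner_commute[of y x])
    using cs by algebra
qed

(* if c lies between |x|^2 and |y|^2, some rotation gives the second vector
   squared norm exactly c (intermediate value theorem on [0, pi/2]) *)
lemma rotation_hits_level:
  fixes x y :: "'a::real_normed_vector"
  assumes "(norm x ^2 - c) * (norm y ^2 - c) \<le> 0"
  shows "\<exists>t. norm ((- sin t) *\<^sub>R x + cos t *\<^sub>R y)^2 = c"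
proof -
  define f where "f = (\<lambda>t. norm ((- sin t) *\<^sub>R x + cos t *\<^sub>R y)^2)"
  have cont: "\<forall>t. 0 \<le> t \<and> t \<le> pi/2 \<longrightarrow> isCont f t"
    unfolding f_def by (intro allI impI continuous_intros)
  have f0: "f 0 = norm y ^2" and f1: "f (pi/2) = norm x ^2" by (simp_all add: f_def)
  consider "norm y ^2 \<le> c" "c \<le> norm x ^2" | "norm x ^2 \<le> c" "c \<le> norm y ^2"
    using assms by (auto simp: mult_le_0_iff)
  then have "\<exists>t. 0 \<le> t \<and> t \<le> pi/2 \<and> f t = c"
  proof cases
    case 1
    then show ?thesis using IVT[of f 0 c "pi/2"] cont f0 f1 by simp
  next
    case 2
    then show ?thesis using IVT2[of f "pi/2" c 0] cont f0 f1 by simp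
  qed
  then show ?thesis unfolding f_def by blast
qed

lemma opposite_side_of_mean:
  fixes a :: "nat \<Rightarrow> real"
  assumes mean: "(\<Sum>k<Suc M. a k) = real (Suc M) * c" and last: "a M \<noteq> c"
  shows "\<exists>j<M. (a j - c) * (a M - c) \<le> 0"
proof (rule ccontr)
  assume "\<not> ?thesis"
  moreover have "(a M - c) * (a M - c) > 0"
    using last by (cases "a M < c") (auto intro: mult_pos_pos mult_neg_neg)
  ultimately have "\<forall>j<Suc M. (a j - c) * (a M - c) > 0"
    by (auto simp: less_Suc_eq not_le)
  then have "(\<Sum>k<Suc M. (a k - c) * (a M - c)) > 0"
    by (intro sum_pos) auto
  moreover have "(\<Sum>k<Suc M. (a k - c) * (a M - c)) = ((\<Sum>k<Suc M. a k) - real (Suc M) * c) * (a M - c)"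
    by (simp add: sum_distrib_right[symmetric] sum_subtractf)
  ultimately show False using mean by simp
qed

lemma sum_change_two:
  fixes f g :: "'a \<Rightarrow> 'b::comm_monoid_add"
  assumes "finite A" "j \<in> A" "m \<in> A" "j \<noteq> m"
    and "\<And>k. k \<in> A \<Longrightarrow> k \<noteq> j \<Longrightarrow> k \<noteq> m \<Longrightarrow> f k = g k"
    and "f j + f m = g j + g m"
  shows "sum f A = sum g A"
proof -
  have split: "sum h A = h j + (h m + sum h (A - {j} - {m}))" for h :: "'a \<Rightarrow> 'b"
    using assms(1-4) by (simp add: sum.remove[of A j] sum.remove[of "A - {j}" m])
  have "sum f (A - {j} - {m}) = sum g (A - {j} - {m})"
    using assms(5) by (intro sum.cong) auto
  then show ?thesis using assms(6) split[of f] split[of g] by (simp add: add.assoc[symmetric])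
qed

lemma rotate_last_to_mean:
  fixes v :: "nat \<Rightarrow> complex^'n"
  assumes mean: "(\<Sum>k<Suc M. norm (v k)^2) = real (Suc M) * c"
  shows "\<exists>w. norm (w M)^2 = c \<and> (\<Sum>k<Suc M. norm (w k)^2) = (\<Sum>k<Suc M. norm (v k)^2)
           \<and> (\<Sum>k<Suc M. outer (w k)) = (\<Sum>k<Suc M. outer (v k))"
proof (cases "norm (v M)^2 = c")
  case True
  then show ?thesis by blast
next
  case False
  from opposite_side_of_mean[of "\<lambda>k. norm (v k)^2", OF mean False]
  obtain j where j: "j < M" "(norm (v j)^2 - c) * (norm (v M)^2 - c) \<le> 0" by blast
  define x where "x = v j"
  define y where "y = v M"
  obtain t where t: "norm ((- sin t) *\<^sub>R x + cos t *\<^sub>R y)^2 = c"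
    using rotation_hits_level[of x c y] j(2) by (auto simp: x_def y_def)
  define w where "w = v(j := cos t *\<^sub>R x + sin t *\<^sub>R y, M := (- sin t) *\<^sub>R x + cos t *\<^sub>R y)"
  have "j \<noteq> M" using j by simp
  have "(\<Sum>k<Suc M. norm (w k)^2) = (\<Sum>k<Suc M. norm (v k)^2)"
    by (rule sum_change_two[where j=j and m=M])
      (use j \<open>j \<noteq> M\<close> norm_rotation[of t x y] in \<open>auto simp: w_def x_def y_def\<close>)
  moreover have "(\<Sum>k<Suc M. outer (w k)) = (\<Sum>k<Suc M. outer (v k))"
    by (rule sum_change_two[where j=j and m=M])
      (use j \<open>j \<noteq> M\<close> outer_rotation[of t x y] in \<open>auto simp: w_def x_def y_def\<close>)
  moreover have "norm (w M)^2 = c" using t by (simp add: w_def)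
  ultimately show ?thesis by blast
qed

lemma equalize_norms:
  fixes v :: "nat \<Rightarrow> complex^'n"
  shows "(\<Sum>k<M. norm (v k)^2) = real M * c \<Longrightarrow>
    \<exists>u. (\<forall>k<M. norm (u k)^2 = c) \<and> (\<Sum>k<M. outer (u k)) = (\<Sum>k<M. outer (v k))"
proof (induction M arbitrary: v)
  case 0
  then show ?case by auto
next
  case (Suc M)
  from rotate_last_to_mean[OF Suc(2)] obtain w where
    w: "norm (w M)^2 = c" "(\<Sum>k<Suc M. norm (w k)^2) = (\<Sum>k<Suc M. norm (v k)^2)"
       "(\<Sum>k<Suc M. outer (w k)) = (\<Sum>k<Suc M. outer (v k))" by blast
  have "(\<Sum>k<M. norm (w k)^2) = real M * c"
    using w(1,2) Suc(2) by (simp add: algebra_simps)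
  from Suc(1)[OF this] obtain u where
    u: "\<forall>k<M. norm (u k)^2 = c" "(\<Sum>k<M. outer (u k)) = (\<Sum>k<M. outer (w k))" by blast
  have "(\<Sum>k<Suc M. outer ((u(M := w M)) k)) = (\<Sum>k<Suc M. outer (w k))"
    using u(2) by simp
  then show ?case using w(1,3) u(1)
    by (intro exI[of _ "u(M := w M)"]) (auto simp: less_Suc_eq)
qed

lemma norm_sq_vec: "norm (v :: complex^'n) ^ 2 = (\<Sum>i\<in>UNIV. (cmod (v$i))^2)"
  by (simp add: norm_vec_def L2_set_def sum_nonneg)

lemma trace_outer: "trace (outer v) = complex_of_real (norm v ^ 2)"
  unfolding trace_def outer_def norm_sq_vec by (simp add: complex_mult_cnj cmod_power2)

lemma trace_sum: "trace (\<Sum>k\<in>A. B k) = (\<Sum>k\<in>A. trace (B k))"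
  unfolding trace_def by (simp add: sum.swap[of _ A])

lemma outer_scaleR: "outer (r *\<^sub>R u) = (r^2) *\<^sub>R outer u"
  unfolding outer_def vec_eq_iff
  by (simp add: vector_scaleR_component power2_eq_square del: scaleR_conv_of_real)

(* unit vectors exist; needed for the degenerate case Sigma = 0 *)
lemma norm_axis_one: "norm (axis i (1::complex)) = 1"
proof -
  have "(\<Sum>j\<in>UNIV. (cmod (axis i (1::complex) $ j))^2) = 1"
    by (simp add: axis_def if_distrib[of "\<lambda>z. (cmod z)^2"] cong: if_cong)
  then have "norm (axis i (1::complex)) ^ 2 = 1" by (simp add: norm_sq_vec)
  then show ?thesis by (simp add: power2_eq_1_iff)
qed

lemma psd_equal_norm_decomposition:
  fixes S :: "complex^'n^'n"
  assumes "psd S" "rank S \<le> M"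
  shows "\<exists>u. (\<forall>k<M. complex_of_real (norm (u k)^2) = trace S / of_nat M)
             \<and> S = (\<Sum>k<M. outer (u k))"
proof -
  obtain v where v: "S = (\<Sum>k<M. outer (v k))" using psd_sum_outer[OF assms] by blast
  define c where "c = (\<Sum>k<M. norm (v k)^2) / real M"
  have tr: "trace S = complex_of_real (\<Sum>k<M. norm (v k)^2)"
    unfolding v trace_sum trace_outer by simp
  show ?thesis
  proof (cases "M = 0")
    case True
    then show ?thesis using v by simp
  next
    case False
    then have "(\<Sum>k<M. norm (v k)^2) = real M * c" by (simp add: c_def)
    from equalize_norms[OF this] obtain u where
      "\<forall>k<M. norm (u k)^2 = c" "(\<Sum>k<M. outer (u k)) = (\<Sum>k<M. outer (v k))" by blast
    then show ?thesis using v tr by (intro exI[of _ u]) (simp add: c_def)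
  qed
qed

lemma unit_vectors_equal_powers:
  fixes u :: "nat \<Rightarrow> complex^'n"
  assumes norms: "\<forall>k<M. norm (u k)^2 = c" and cpos: "c > 0"
  shows "\<exists>t. (\<forall>m\<in>{1..M}. norm (t m) = 1)
             \<and> (\<Sum>k<M. outer (u k)) = (\<Sum>m=1..M. c *\<^sub>R outer (t m))"
proof -
  define t where "t = (\<lambda>m. (1 / sqrt c) *\<^sub>R u (m - 1))"
  have nu: "norm (u k) = sqrt c" if "k < M" for k
    using norms that by (metis norm_ge_zero real_sqrt_unique)
  have "\<forall>m\<in>{1..M}. norm (t m) = 1" using nu cpos by (auto simp: t_def)
  moreover have "(\<Sum>m=1..M. c *\<^sub>R outer (t m)) = (\<Sum>m=1..M. outer (u (m - 1)))"
    using cpos by (intro sum.cong) (auto simp: t_def outer_scaleR power_divide)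
  moreover have "\<dots> = (\<Sum>k<M. outer (u k))"
    using sum.atLeast1_atMost_eq[of "\<lambda>m. outer (u (m - 1))" M] by simp
  ultimately show ?thesis by (intro exI[of _ t]) simp
qed

theorem theorem5:
  fixes Sigma :: "complex^'n^'n" and M :: nat
  assumes "psd Sigma"
    and "M \<ge> rank Sigma"
  shows "\<exists>(t :: nat \<Rightarrow> complex^'n) (p :: nat \<Rightarrow> real).
           (\<forall>m\<in>{1..M}. norm (t m) = 1) \<and>
           Sigma = (\<Sum>m=1..M. p m *\<^sub>R outer (t m)) \<and>
           (\<forall>m\<in>{1..M}. complex_of_real (p m) = trace Sigma / of_nat M)"
proof -
  obtain u where u: "\<forall>k<M. complex_of_real (norm (u k)^2) = trace Sigma / of_nat M"
    and Sigma: "Sigma = (\<Sum>k<M. outer (u k))"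
    using psd_equal_norm_decomposition[OF assms] by blast
  define c where "c = Re (trace Sigma / of_nat M)"
  have norms: "\<forall>k<M. norm (u k)^2 = c" using u unfolding c_def by (metis Re_complex_of_real)
  show ?thesis
  proof (cases "M = 0 \<or> c = 0")
    case True
    (* then every u_k vanishes, Sigma = 0, and any unit vectors with zero power work *)
    then have "Sigma = 0" "trace Sigma / of_nat M = 0" using norms u Sigma by auto
    then show ?thesis
      by (intro exI[of _ "\<lambda>_. axis undefined 1"] exI[of _ "\<lambda>_. 0"]) (simp add: norm_axis_one trace_def)
  next
    case False
    then have u0: "norm (u 0)^2 = c" using norms by simp
    then have "c > 0" using False by (metis zero_le_power2 order_le_less)
    from unit_vectors_equal_powers[OF norms this] obtain t where
      "\<forall>m\<in>{1..M}. norm (t m) = 1" "Sigma = (\<Sum>m=1..M. c *\<^sub>R outer (t m))"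
      unfolding Sigma by blast
    moreover have "complex_of_real c = trace Sigma / of_nat M"
      using u u0 False by auto
    ultimately show ?thesis by (intro exI[of _ t] exI[of _ "\<lambda>_. c"]) auto
  qed
qed

end
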